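(* For all integers $u,v\ge1$, with $u!=(u,u-1,\ldots,2,1)$ ($0!=\emptyset$) and all universal characters evaluated at $(x,y)$, $$S_{[(u+1)!,(v+1)!]}S_{[(u-1)!,(v-1)!]}-S_{[(u+1)!,(v-1)!]}S_{[(u-1)!,(v+1)!]}+S_{[u!,v!]}^2=0,$$ $$S_{[(u+1)!,(v-1)!]}S_{[(u-1)!,(v+1)!]}-S_{[u!,(v+2,v-1,\ldots,1)]}S_{[(u+2,u-1,\ldots,1),v!]}+S_{[(u+2,u-1,\ldots,1),(v+2,v-1,\ldots,1)]}S_{[u!,v!]}=0.$$
   Context: For $x=(x_1,x_2,\dots)$ define $p_k(x)$ by $\sum_{k\ge0}p_k(x)z^k=\exp(\sum_{k\ge1}x_kz^k)$ and $p_{-k}=0$ for $k>0$; $q_k(y)$ is the same with $y=(y_1,y_2,\dots)$ in place of $x$. For partitions $\lambda=(\lambda_1,\dots,\lambda_l)$, $\mu=(\mu_1,\dots,\mu_{l'})$, the universal character is $S_{[\lambda,\mu]}(x,y)=\det(a_{ij})_{1\le i,j\le l+l'}$ with $a_{ij}=q_{\mu_{l'-i+1}+i-j}(y)$ for $1\le i\le l'$ and $a_{ij}=p_{\lambda_{i-l'}-i+j}(x)$ for $l'+1\le i\le l+l'$. *)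

theory Defs
  imports "HOL-Computational_Algebra.Formal_Power_Series" "Jordan_Normal_Form.Determinant"
begin

text \<open>x = (x_1, x_2, ...) is represented by a function nat => 'a; the value x 0 is ignored.
  The generating series sum_{k>=1} x_k z^k as a formal power series.\<close>
definition gen_series :: "(nat \<Rightarrow> 'a::field_char_0) \<Rightarrow> 'a fps" where
  "gen_series x = Abs_fps (\<lambda>k. if k = 0 then 0 else x k)"

definition schur_p :: "(nat \<Rightarrow> 'a::field_char_0) \<Rightarrow> int \<Rightarrow> 'a" where
  "schur_p x k = (if k < 0 then 0 else fps_nth (fps_exp 1 oo gen_series x) (nat k))"

text \<open>Universal character S_[lambda,mu](x,y), partitions given as lists (weakly decreasing),
  matrix indices 0-based (i0 = i-1, j0 = j-1).\<close>
definition univ_char :: "nat list \<Rightarrow> nat list \<Rightarrow> (nat \<Rightarrow> 'a::field_char_0) \<Rightarrow> (nat \<Rightarrow> 'a) \<Rightarrow> 'a" where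
  "univ_char lam mu x y =
     (let l = length lam; l' = length mu in
      det (mat (l + l') (l + l')
        (\<lambda>(i, j). if i < l'
                  then schur_p y (int (mu ! (l' - i - 1)) + int i - int j)
                  else schur_p x (int (lam ! (i - l')) - int i + int j))))"

definition stair :: "nat \<Rightarrow> nat list" where
  "stair u = rev [1..<u+1]"

definition stair2 :: "nat \<Rightarrow> nat list" where
  "stair2 u = (u + 2) # rev [1..<u]"

end

theory Submission
  imports Defs
begin

(* Both identities are three-term Plucker relations
     D(a,b,X) D(c,d,X) - D(a,c,X) D(b,d,X) + D(a,d,X) D(b,c,X) = 0
   between determinants that share all rows X but two.  Writing S[u!,v!] as the determinant
   with rows q_{2i+1-j}(y) (i < v) and p_{u-v-2k+j}(x) (k < u), every character in the second
   identity is such a determinant with X the rows common to all six shapes, after moving two rows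
   to the front.  In the first identity the sizes differ by two; the smaller determinants are
   bordered with the unit rows e_0 = (q_{-j}(y))_j and e_N = (p_{j-N}(x))_j, which leaves them
   unchanged, so that it becomes a Plucker relation as well (the Desnanot-Jacobi identity). *)

section \<open>Determinants of lists of rows\<close>

definition det_rows :: "(nat \<Rightarrow> 'a::comm_ring_1) list \<Rightarrow> 'a" where
  "det_rows rs = det (mat (length rs) (length rs) (\<lambda>(i, j). (rs ! i) j))"

lemma det_rows_cong:
  assumes "length rs = length ss" "\<And>i j. i < length rs \<Longrightarrow> j < length rs \<Longrightarrow> (rs ! i) j = (ss ! i) j"
  shows "det_rows rs = det_rows ss"
  unfolding det_rows_def using assms by (intro arg_cong[where f = det] eq_matI) auto

lemma det_rows_swap: "det_rows (xs @ a # b # ys) = - det_rows (xs @ b # a # ys)"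
proof -
  let ?n = "length (xs @ a # b # ys)"
  have "mat ?n ?n (\<lambda>(i, j). ((xs @ b # a # ys) ! i) j) =
        swaprows (length xs) (Suc (length xs)) (mat ?n ?n (\<lambda>(i, j). ((xs @ a # b # ys) ! i) j))"
    by (rule eq_matI) (auto simp: nth_append nth_Cons split: nat.splits)
  then show ?thesis
    unfolding det_rows_def by (simp, subst det_swaprows[where n = ?n]) auto
qed

lemma det_rows_move_to_front: "det_rows (xs @ r # ys) = (-1) ^ length xs * det_rows (r # xs @ ys)"
proof (induction xs arbitrary: ys rule: rev_induct)
  case (snoc x xs)
  have "det_rows ((xs @ [x]) @ r # ys) = - det_rows (xs @ r # x # ys)"
    using det_rows_swap[of xs r x ys] by simp
  also have "\<dots> = - ((-1) ^ length xs * det_rows (r # xs @ x # ys))"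
    using snoc by simp
  finally show ?case by simp
qed simp

lemma det_rows_pair_to_front: "det_rows (xs @ r1 # r2 # ys) = det_rows (r1 # r2 # xs @ ys)"
proof -
  have "det_rows (xs @ r1 # r2 # ys) = (-1) ^ length xs * det_rows ((r1 # xs) @ r2 # ys)"
    by (simp add: det_rows_move_to_front)
  also have "\<dots> = (-1) ^ length xs * (-1) ^ Suc (length xs) * det_rows (r2 # r1 # xs @ ys)"
    by (simp only: det_rows_move_to_front length_Cons) simp
  also have "det_rows (r2 # r1 # xs @ ys) = - det_rows (r1 # r2 # xs @ ys)"
    using det_rows_swap[of "[]" r2 r1 "xs @ ys"] by simp
  finally show ?thesis by simp
qed

lemma det_rows_move_with_last_to_front:
  "det_rows (ys @ r # zs @ [d]) = (-1) ^ length zs * det_rows (r # d # ys @ zs)"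
proof -
  have "det_rows ((ys @ r # zs) @ [d]) = (-1) ^ (length ys + Suc (length zs)) * det_rows ((d # ys) @ r # zs)"
    using det_rows_move_to_front[of "ys @ r # zs" d "[]"] by simp
  also have "det_rows ((d # ys) @ r # zs) = (-1) ^ Suc (length ys) * det_rows (r # d # ys @ zs)"
    using det_rows_move_to_front[of "d # ys" r zs] by simp
  finally show ?thesis
    by (simp add: power_add algebra_simps)
qed

lemma det_rows_repeated_row:
  assumes "i < length rs" "j < length rs" "i \<noteq> j" "rs ! i = rs ! j"
  shows "det_rows rs = 0"
  unfolding det_rows_def
  by (rule det_identical_rows[of _ "length rs" i j]) (use assms in \<open>auto\<close>)

definition delete_col :: "nat \<Rightarrow> (nat \<Rightarrow> 'a) \<Rightarrow> nat \<Rightarrow> 'a" where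
  "delete_col j r = (\<lambda>k. r (if k < j then k else Suc k))"

lemma delete_col_0 [simp]: "delete_col 0 = (\<lambda>r k. r (Suc k))"
  by (simp add: delete_col_def fun_eq_iff)

lemma det_rows_delete_row_col:
  assumes "i < length rs" "j < length rs"
  shows "det (mat_delete (mat (length rs) (length rs) (\<lambda>(i, j). (rs ! i) j)) i j)
       = det_rows (map (delete_col j) (take i rs @ drop (Suc i) rs))"
  unfolding det_rows_def using assms
  by (intro arg_cong[where f = det] eq_matI) (auto simp: mat_delete_def delete_col_def nth_append min_def)

lemma det_rows_Cons_expansion:
  "det_rows (r # rs) = (\<Sum>j<Suc (length rs). (-1) ^ j * r j * det_rows (map (delete_col j) rs))"
proof -
  let ?M = "mat (Suc (length rs)) (Suc (length rs)) (\<lambda>(i, j). ((r # rs) ! i) j)"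
  have "det_rows (r # rs) = (\<Sum>j<Suc (length rs). ?M $$ (0, j) * cofactor ?M 0 j)"
    unfolding det_rows_def by (simp add: laplace_expansion_row[of ?M "Suc (length rs)" 0])
  also have "\<dots> = (\<Sum>j<Suc (length rs). (-1) ^ j * r j * det_rows (map (delete_col j) rs))"
    using det_rows_delete_row_col[of 0 "r # rs"] by (intro sum.cong) (auto simp: cofactor_def)
  finally show ?thesis .
qed

lemma det_rows_unit_first:
  assumes "r 0 = 1" "\<And>j. 0 < j \<Longrightarrow> r j = 0"
  shows "det_rows (r # rs) = det_rows (map (\<lambda>s k. s (Suc k)) rs)"
proof -
  have "det_rows (r # rs) = (\<Sum>j<Suc (length rs). (-1) ^ j * r j * det_rows (map (delete_col j) rs))"
    by (rule det_rows_Cons_expansion)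
  also have "\<dots> = det_rows (map (delete_col 0) rs)"
    using assms by (subst sum.lessThan_Suc_shift) simp
  finally show ?thesis by simp
qed

lemma det_rows_unit_last:
  assumes "r (length rs) = 1" "\<And>j. j < length rs \<Longrightarrow> r j = 0"
  shows "det_rows (rs @ [r]) = det_rows rs"
proof -
  let ?n = "length rs"
  have "det_rows (rs @ [r]) = (-1) ^ ?n * det_rows (r # rs)"
    using det_rows_move_to_front[of rs r "[]"] by simp
  also have "det_rows (r # rs) = (\<Sum>j<Suc ?n. (-1) ^ j * r j * det_rows (map (delete_col j) rs))"
    by (rule det_rows_Cons_expansion)
  also have "\<dots> = (-1) ^ ?n * det_rows (map (delete_col ?n) rs)"
    using assms by (simp add: sum.neutral)
  also have "det_rows (map (delete_col ?n) rs) = det_rows rs"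
    by (rule det_rows_cong) (auto simp: delete_col_def)
  finally show ?thesis by simp
qed

lemma det_rows_alternating_column_sum:
  assumes W: "length W = Suc n" and "j < n"
  shows "(\<Sum>i<Suc n. (-1) ^ i * (W ! i) j * det_rows (take i W @ drop (Suc i) W)) = 0"
proof -
  \<comment> \<open>column n of W' repeats column j, so det_rows W' = 0; expand it along column n\<close>
  define W' where "W' = map (\<lambda>r k. if k < n then r k else r j) W"
  let ?B = "mat (Suc n) (Suc n) (\<lambda>(i, k). (W' ! i) k)"
  have B: "?B \<in> carrier_mat (Suc n) (Suc n)" by simp
  let ?S = "\<Sum>i<Suc n. (-1) ^ i * (W ! i) j * det_rows (take i W @ drop (Suc i) W)"
  have entry: "?B $$ (i, n) * cofactor ?B i n
      = (-1) ^ n * ((-1) ^ i * (W ! i) j * det_rows (take i W @ drop (Suc i) W))" if "i < Suc n" for i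
  proof -
    have "det (mat_delete ?B i n) = det_rows (map (delete_col n) (take i W' @ drop (Suc i) W'))"
      using det_rows_delete_row_col[of i W' n] that W by (simp add: W'_def)
    also have "\<dots> = det_rows (take i W @ drop (Suc i) W)"
      using that W by (intro det_rows_cong) (auto simp: W'_def delete_col_def nth_append min_def)
    finally show ?thesis
      using that W by (simp add: cofactor_def W'_def power_add)
  qed
  have "0 = det ?B"
    by (rule sym, rule det_identical_columns[OF B, of j n])
      (use assms in \<open>auto simp: W'_def\<close>)
  also have "\<dots> = (\<Sum>i<Suc n. ?B $$ (i, n) * cofactor ?B i n)"
    by (rule laplace_expansion_column[OF B]) simp
  also have "\<dots> = (-1) ^ n * ?S"
    unfolding sum_distrib_left by (rule sum.cong[OF refl], rule entry) simp
  finally show ?thesis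
    using left_minus_one_mult_self[of n ?S] by simp
qed

lemma det_rows_plucker:
  "det_rows (a # b # X) * det_rows (c # d # X) - det_rows (a # c # X) * det_rows (b # d # X)
     + det_rows (a # d # X) * det_rows (b # c # X) = 0"
proof -
  \<comment> \<open>Expanding det_rows (W ! i # d # X) along its first row, the coefficients of the minors
    are alternating column sums of W, which vanish; for i \<ge> 3 the row W ! i is repeated.\<close>
  define n where "n = length X + 2"
  define W where "W = a # b # c # X"
  have W: "length W = Suc n" by (simp add: W_def n_def)
  define f where "f i = (-1) ^ i * det_rows (take i W @ drop (Suc i) W) * det_rows (W ! i # d # X)" for i
  have expand: "det_rows (r # d # X) = (\<Sum>j<n. (-1) ^ j * r j * det_rows (map (delete_col j) (d # X)))" for r
    using det_rows_Cons_expansion[of r "d # X"] by (simp add: n_def)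
  have "(\<Sum>i<Suc n. f i) = (\<Sum>j<n. (-1) ^ j * det_rows (map (delete_col j) (d # X)) *
      (\<Sum>i<Suc n. (-1) ^ i * (W ! i) j * det_rows (take i W @ drop (Suc i) W)))"
    unfolding f_def expand sum_distrib_left sum_distrib_right
    by (subst sum.swap) (simp add: algebra_simps)
  also have "\<dots> = 0"
    using det_rows_alternating_column_sum[OF W] by simp
  finally have "(\<Sum>i<Suc n. f i) = 0" .
  moreover have "(\<Sum>i<Suc n. f i) = f 0 + f 1 + f 2 + (\<Sum>i<length X. f (i + 3))"
    by (simp add: n_def sum.lessThan_Suc_shift eval_nat_numeral del: sum.lessThan_Suc)
  moreover have "f (i + 3) = 0" if "i < length X" for i
    using that det_rows_repeated_row[of 0 "W ! (i + 3) # d # X" "i + 2"]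
    by (simp add: f_def W_def eval_nat_numeral)
  ultimately show ?thesis
    by (simp add: f_def W_def eval_nat_numeral algebra_simps)
qed

section \<open>Universal characters of staircase shapes\<close>

lemma schur_p_0 [simp]: "schur_p x 0 = 1"
  by (simp add: schur_p_def)

lemma schur_p_neg: "k < 0 \<Longrightarrow> schur_p x k = 0"
  by (simp add: schur_p_def)

definition q_row :: "(nat \<Rightarrow> 'a::field_char_0) \<Rightarrow> int \<Rightarrow> nat \<Rightarrow> 'a" where
  "q_row y a = (\<lambda>j. schur_p y (a - int j))"

definition p_row :: "(nat \<Rightarrow> 'a::field_char_0) \<Rightarrow> int \<Rightarrow> nat \<Rightarrow> 'a" where
  "p_row x b = (\<lambda>j. schur_p x (b + int j))"

definition q_rows_of :: "(nat \<Rightarrow> 'a::field_char_0) \<Rightarrow> nat list \<Rightarrow> (nat \<Rightarrow> 'a) list" where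
  "q_rows_of y mu = map (\<lambda>i. q_row y (int (mu ! (length mu - Suc i)) + int i)) [0..<length mu]"

definition p_rows_of :: "(nat \<Rightarrow> 'a::field_char_0) \<Rightarrow> int \<Rightarrow> nat list \<Rightarrow> (nat \<Rightarrow> 'a) list" where
  "p_rows_of x s lam = map (\<lambda>k. p_row x (int (lam ! k) + s - int k)) [0..<length lam]"

lemma univ_char_eq_det_rows:
  "univ_char lam mu x y = det_rows (q_rows_of y mu @ p_rows_of x (- int (length mu)) lam)"
  unfolding univ_char_def det_rows_def q_rows_of_def p_rows_of_def Let_def
  by (simp, intro arg_cong[where f = det] eq_matI)
    (auto simp: nth_append q_row_def p_row_def algebra_simps)

lemma q_rows_of_Nil [simp]: "q_rows_of y [] = []"
  by (simp add: q_rows_of_def)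

lemma p_rows_of_Nil [simp]: "p_rows_of x s [] = []"
  by (simp add: p_rows_of_def)

lemma q_rows_of_Cons: "q_rows_of y (a # mu) = q_rows_of y mu @ [q_row y (int a + int (length mu))]"
  unfolding q_rows_of_def by (auto simp: nth_Cons' intro!: map_cong)

lemma p_rows_of_Cons: "p_rows_of x s (a # lam) = p_row x (int a + s) # p_rows_of x (s - 1) lam"
  unfolding p_rows_of_def by (simp add: map_upt_Suc del: upt_Suc) (auto simp: algebra_simps)

definition q_rows :: "(nat \<Rightarrow> 'a::field_char_0) \<Rightarrow> int \<Rightarrow> nat \<Rightarrow> (nat \<Rightarrow> 'a) list" where
  "q_rows y s n = map (\<lambda>i. q_row y (s + 2 * int i)) [0..<n]"

definition p_rows :: "(nat \<Rightarrow> 'a::field_char_0) \<Rightarrow> int \<Rightarrow> nat \<Rightarrow> (nat \<Rightarrow> 'a) list" where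
  "p_rows x s n = map (\<lambda>k. p_row x (s - 2 * int k)) [0..<n]"

lemma q_rows_0 [simp]: "q_rows y s 0 = []"
  by (simp add: q_rows_def)

lemma p_rows_0 [simp]: "p_rows x s 0 = []"
  by (simp add: p_rows_def)

lemma length_q_rows [simp]: "length (q_rows y s n) = n"
  by (simp add: q_rows_def)

lemma length_p_rows [simp]: "length (p_rows x s n) = n"
  by (simp add: p_rows_def)

lemma q_rows_Suc: "q_rows y s (Suc n) = q_rows y s n @ [q_row y (s + 2 * int n)]"
  by (simp add: q_rows_def)

lemma p_rows_Suc: "p_rows x s (Suc n) = p_rows x s n @ [p_row x (s - 2 * int n)]"
  by (simp add: p_rows_def)

lemma q_rows_Suc_Cons: "q_rows y s (Suc n) = q_row y s # q_rows y (s + 2) n"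
  unfolding q_rows_def by (simp add: map_upt_Suc del: upt_Suc) (simp add: algebra_simps)

lemma p_rows_Suc_Cons: "p_rows x s (Suc n) = p_row x s # p_rows x (s - 2) n"
  unfolding p_rows_def by (simp add: map_upt_Suc del: upt_Suc) (simp add: algebra_simps)

lemma stair_0 [simp]: "stair 0 = []"
  by (simp add: stair_def)

lemma stair_Suc: "stair (Suc u) = Suc u # stair u"
  by (simp add: stair_def)

lemma stair2_Suc: "stair2 (Suc u) = (u + 3) # stair u"
  by (simp add: stair_def stair2_def)

lemma length_stair [simp]: "length (stair u) = u"
  by (simp add: stair_def)

lemma q_rows_of_stair: "q_rows_of y (stair m) = q_rows y 1 m"
  by (induction m) (simp_all add: stair_Suc q_rows_Suc q_rows_of_Cons algebra_simps)

lemma p_rows_of_stair: "p_rows_of x s (stair u) = p_rows x (int u + s) u"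
  by (induction u arbitrary: s) (simp_all add: stair_Suc p_rows_Suc_Cons p_rows_of_Cons algebra_simps)

lemma univ_char_stair:
  "univ_char (stair u) (stair v) x y = det_rows (q_rows y 1 v @ p_rows x (int u - int v) u)"
  by (simp add: univ_char_eq_det_rows q_rows_of_stair p_rows_of_stair)

lemma univ_char_stair_stair2:
  "univ_char (stair u) (stair2 (Suc v)) x y
     = det_rows (q_rows y 1 v @ q_row y (2 * int v + 3) # p_rows x (int u - int v - 1) u)"
  by (simp add: univ_char_eq_det_rows stair2_Suc q_rows_of_Cons q_rows_of_stair p_rows_of_stair
      algebra_simps)

lemma univ_char_stair2_stair:
  "univ_char (stair2 (Suc u)) (stair v) x y
     = det_rows (q_rows y 1 v @ p_row x (int u - int v + 3) # p_rows x (int u - int v - 1) u)"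
  by (simp add: univ_char_eq_det_rows stair2_Suc p_rows_of_Cons q_rows_of_stair p_rows_of_stair
      algebra_simps)

lemma univ_char_stair2_stair2:
  "univ_char (stair2 (Suc u)) (stair2 (Suc v)) x y
     = det_rows (q_rows y 1 v @ q_row y (2 * int v + 3) # p_row x (int u - int v + 2)
         # p_rows x (int u - int v - 2) u)"
  by (simp add: univ_char_eq_det_rows stair2_Suc q_rows_of_Cons p_rows_of_Cons q_rows_of_stair
      p_rows_of_stair algebra_simps)

text \<open>Since p_0 = q_0 = 1 and p_k = q_k = 0 for k < 0, q_row y 0 and p_row x (- n) are the unit
  rows e_0 and e_n; bordering with them amounts to appending a zero part to mu or lam.\<close>

lemma det_rows_q_row_0_first: "det_rows (q_row y 0 # rs) = det_rows (map (\<lambda>r k. r (Suc k)) rs)"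
  by (rule det_rows_unit_first) (simp_all add: q_row_def schur_p_neg)

lemma det_rows_p_row_last:
  assumes "n = length rs"
  shows "det_rows (rs @ [p_row x (- int n)]) = det_rows rs"
  by (rule det_rows_unit_last) (simp_all add: assms p_row_def schur_p_neg)

lemma shift_q_rows: "map (\<lambda>r k. r (Suc k)) (q_rows y s n) = q_rows y (s - 1) n"
  by (simp add: q_rows_def q_row_def algebra_simps)

lemma shift_p_rows: "map (\<lambda>r k. r (Suc k)) (p_rows x s n) = p_rows x (s + 1) n"
  by (simp add: p_rows_def p_row_def algebra_simps)

lemma det_rows_p_rows_Suc:
  assumes "s = int n - int (length rs)"
  shows "det_rows (rs @ p_rows x s (Suc n)) = det_rows (rs @ p_rows x s n)"
proof -
  have "s - 2 * int n = - int (length rs + n)"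
    using assms by simp
  then have "det_rows (rs @ p_rows x s (Suc n))
      = det_rows ((rs @ p_rows x s n) @ [p_row x (- int (length rs + n))])"
    by (simp only: p_rows_Suc append_assoc)
  also have "\<dots> = det_rows (rs @ p_rows x s n)"
    by (rule det_rows_p_row_last) simp
  finally show ?thesis .
qed

lemma det_rows_q_row_0_q_rows:
  "det_rows (q_row y 0 # q_rows y 1 (Suc m) @ p_rows x s n) = det_rows (q_rows y 1 m @ p_rows x (s + 2) n)"
proof -
  have "det_rows (q_row y 0 # q_rows y 1 (Suc m) @ p_rows x s n)
      = det_rows (q_rows y 0 (Suc m) @ p_rows x (s + 1) n)"
    by (simp add: det_rows_q_row_0_first shift_q_rows shift_p_rows)
  also have "\<dots> = det_rows (q_row y 0 # q_rows y 2 m @ p_rows x (s + 1) n)"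
    by (simp add: q_rows_Suc_Cons)
  also have "\<dots> = det_rows (q_rows y 1 m @ p_rows x (s + 2) n)"
    by (simp add: det_rows_q_row_0_first shift_q_rows shift_p_rows add.assoc)
  finally show ?thesis .
qed

lemma univ_char_stair_frame_first:
  "univ_char (stair u) (stair v) x y
     = det_rows (q_row y 0 # q_rows y 1 (Suc v) @ p_rows x (int u - int v - 2) u)"
  by (simp add: univ_char_stair det_rows_q_row_0_q_rows)

lemma univ_char_stair_frame_last:
  "univ_char (stair u) (stair v) x y
     = det_rows (q_rows y 1 v @ p_rows x (int u - int v) (Suc u) @ [p_row x (- int (u + v + 1))])"
  using det_rows_p_row_last[of "u + v + 1" "q_rows y 1 v @ p_rows x (int u - int v) (Suc u)" x]
  by (simp add: univ_char_stair det_rows_p_rows_Suc)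

lemma univ_char_stair_frame_both:
  "univ_char (stair u) (stair v) x y
     = det_rows (q_row y 0 # q_rows y 1 (Suc v) @ p_rows x (int u - int v - 2) (Suc u)
         @ [p_row x (- int (u + v + 3))])"
  using univ_char_stair_frame_first[of u v x y]
    det_rows_p_rows_Suc[of "int u - int v - 2" u "q_row y 0 # q_rows y 1 (Suc v)" x]
    det_rows_p_row_last[of "u + v + 3" "q_row y 0 # q_rows y 1 (Suc v) @ p_rows x (int u - int v - 2) (Suc u)" x]
  by simp

lemma univ_char_stair_desnanot_jacobi:
  "univ_char (stair (u + 2)) (stair (v + 2)) x y * univ_char (stair u) (stair v) x y
   - univ_char (stair (u + 2)) (stair v) x y * univ_char (stair u) (stair (v + 2)) x y
   + (univ_char (stair (u + 1)) (stair (v + 1)) x y)^2 = 0"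
proof -
  define Y where "Y = q_rows y 1 (Suc v)"
  define Z where "Z = p_rows x (int u - int v - 2) (Suc u)"
  define a where "a = p_row x (int u - int v)"
  define b where "b = q_row y (2 * int v + 3)"
  define c where "c = q_row y 0"
  define d where "d = p_row x (- int (u + v + 3))"
  note defs = Y_def Z_def a_def b_def c_def d_def q_rows_Suc p_rows_Suc_Cons algebra_simps
  have S1: "univ_char (stair (u + 2)) (stair (v + 2)) x y = - det_rows (a # b # Y @ Z)"
    using det_rows_pair_to_front[of Y b a Z] det_rows_swap[of "[]" a b "Y @ Z"]
    by (simp add: univ_char_stair defs)
  have S2: "univ_char (stair u) (stair v) x y = (-1) ^ length (Y @ Z) * det_rows (c # d # Y @ Z)"
    using det_rows_move_with_last_to_front[of "[]" c "Y @ Z" d]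
    by (simp add: univ_char_stair_frame_both defs)
  have S3: "univ_char (stair (u + 2)) (stair v) x y = (-1) ^ Suc (length Y) * det_rows (a # c # Y @ Z)"
    using det_rows_move_to_front[of "c # Y" a Z] by (simp add: univ_char_stair_frame_first defs)
  have S4: "univ_char (stair u) (stair (v + 2)) x y = (-1) ^ length Z * det_rows (b # d # Y @ Z)"
    using det_rows_move_with_last_to_front[of Y b Z d] by (simp add: univ_char_stair_frame_last defs)
  have S5: "univ_char (stair (u + 1)) (stair (v + 1)) x y = (-1) ^ length Z * det_rows (a # d # Y @ Z)"
    using det_rows_move_with_last_to_front[of Y a Z d] by (simp add: univ_char_stair_frame_last defs)
  have S5': "univ_char (stair (u + 1)) (stair (v + 1)) x y = (-1) ^ Suc (length Y) * det_rows (b # c # Y @ Z)"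
    using det_rows_move_to_front[of "c # Y" b Z] by (simp add: univ_char_stair_frame_first defs)
  have "univ_char (stair (u + 2)) (stair (v + 2)) x y * univ_char (stair u) (stair v) x y
      - univ_char (stair (u + 2)) (stair v) x y * univ_char (stair u) (stair (v + 2)) x y
      + (univ_char (stair (u + 1)) (stair (v + 1)) x y)^2
    = - ((-1) ^ length Y * (-1) ^ length Z) *
      (det_rows (a # b # Y @ Z) * det_rows (c # d # Y @ Z) - det_rows (a # c # Y @ Z) * det_rows (b # d # Y @ Z)
       + det_rows (a # d # Y @ Z) * det_rows (b # c # Y @ Z))"
    unfolding power2_eq_square by (subst (2) S5', unfold S1 S2 S3 S4 S5) (simp add: power_add algebra_simps)
  also have "\<dots> = 0"
    by (simp add: det_rows_plucker)
  finally show ?thesis .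
qed

lemma univ_char_stair_stair2_plucker:
  "univ_char (stair (u + 2)) (stair v) x y * univ_char (stair u) (stair (v + 2)) x y
   - univ_char (stair (u + 1)) (stair2 (v + 1)) x y * univ_char (stair2 (u + 1)) (stair (v + 1)) x y
   + univ_char (stair2 (u + 1)) (stair2 (v + 1)) x y * univ_char (stair (u + 1)) (stair (v + 1)) x y
   = 0"
proof -
  define Y where "Y = q_rows y 1 v"
  define Z where "Z = p_rows x (int u - int v - 2) u"
  define a where "a = q_row y (2 * int v + 1)"
  define b where "b = q_row y (2 * int v + 3)"
  define c where "c = p_row x (int u - int v + 2)"
  define d where "d = p_row x (int u - int v)"
  have "univ_char (stair (u + 2)) (stair v) x y = det_rows (Y @ c # d # Z)"
    by (simp add: univ_char_stair p_rows_Suc_Cons Y_def Z_def c_def d_def algebra_simps)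
  moreover have "univ_char (stair u) (stair (v + 2)) x y = det_rows (Y @ a # b # Z)"
    by (simp add: univ_char_stair q_rows_Suc Y_def Z_def a_def b_def algebra_simps)
  moreover have "univ_char (stair (u + 1)) (stair2 (v + 1)) x y = det_rows (Y @ b # d # Z)"
    by (simp add: univ_char_stair_stair2 p_rows_Suc_Cons Y_def Z_def b_def d_def algebra_simps)
  moreover have "univ_char (stair2 (u + 1)) (stair (v + 1)) x y = det_rows (Y @ a # c # Z)"
    by (simp add: univ_char_stair2_stair q_rows_Suc Y_def Z_def a_def c_def algebra_simps)
  moreover have "univ_char (stair2 (u + 1)) (stair2 (v + 1)) x y = det_rows (Y @ b # c # Z)"
    by (simp add: univ_char_stair2_stair2 Y_def Z_def b_def c_def algebra_simps)
  moreover have "univ_char (stair (u + 1)) (stair (v + 1)) x y = det_rows (Y @ a # d # Z)"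
    by (simp add: univ_char_stair q_rows_Suc p_rows_Suc_Cons Y_def Z_def a_def d_def algebra_simps)
  ultimately show ?thesis
    using det_rows_plucker[of a b "Y @ Z" c d] by (simp add: det_rows_pair_to_front algebra_simps)
qed

theorem lemma4p7:
  fixes x y :: "nat \<Rightarrow> 'a::field_char_0" and u v :: nat
  assumes "u \<ge> 1" and "v \<ge> 1"
  shows "univ_char (stair (u+1)) (stair (v+1)) x y * univ_char (stair (u-1)) (stair (v-1)) x y
         - univ_char (stair (u+1)) (stair (v-1)) x y * univ_char (stair (u-1)) (stair (v+1)) x y
         + (univ_char (stair u) (stair v) x y)^2 = 0
     \<and> univ_char (stair (u+1)) (stair (v-1)) x y * univ_char (stair (u-1)) (stair (v+1)) x y
         - univ_char (stair u) (stair2 v) x y * univ_char (stair2 u) (stair v) x y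
         + univ_char (stair2 u) (stair2 v) x y * univ_char (stair u) (stair v) x y = 0"
proof -
  obtain u' where u: "u = Suc u'"
    using assms(1) by (cases u) auto
  obtain v' where v: "v = Suc v'"
    using assms(2) by (cases v) auto
  show ?thesis
    using univ_char_stair_desnanot_jacobi[of u' v' x y] univ_char_stair_stair2_plucker[of u' v' x y]
    unfolding u v by simp
qed

end
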